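(* Let $a_1,a_2,a_3\in\mathbb C$ be distinct and non-collinear, $\{i,j,k\}=\{1,2,3\}$, let $b$ be a point in the interior of the triangle $\Delta_Q$, and let $l_b$ be the straight line through $b$ parallel to the side $\overline{a_ja_k}$. Then there exists a unique point $b'\in l_b$ such that $\int_{a_j}^{a_k}\sqrt{\frac{b'-t}{(t-a_1)(t-a_2)(t-a_3)}}\,dt\in\mathbb R$, and moreover $b'\in\Delta_Q\cap l_b$.
   Context: $\Delta_Q$ is the convex hull of $a_1,a_2,a_3$. The integral is along the straight segment from $a_j$ to $a_k$ with a continuous branch of the square root (the reality condition does not depend on the branch). *)

theory Defs
  imports "HOL-Analysis.Analysis"
begin

definition radicand :: "(nat \<Rightarrow> complex) \<Rightarrow> complex \<Rightarrow> complex \<Rightarrow> complex" where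
  "radicand a c t = (c - t) / ((t - a 1) * (t - a 2) * (t - a 3))"

text \<open>The integral of sqrt(radicand) along the straight segment from a j to a k,
  parametrised by t = a j + s (a k - a j), s in [0,1], with a continuous branch g of the
  square root on the open segment, is a real number.\<close>
definition segment_integral_real ::
  "(nat \<Rightarrow> complex) \<Rightarrow> nat \<Rightarrow> nat \<Rightarrow> complex \<Rightarrow> bool" where
  "segment_integral_real a j k c \<longleftrightarrow>
     (\<exists>g I. continuous_on {0<..<1} g \<and>
        (\<forall>s\<in>{0<..<1::real}. (g s)\<^sup>2 = radicand a c (a j + of_real s * (a k - a j))) \<and>
        ((\<lambda>s. g s * (a k - a j)) has_integral I) {0..1} \<and>
        I \<in> \<real>)"

end

theory Submission
  imports Defs
begin

(* Normalise the triangle so that the side from q = a j to r = a k is the unit segment and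
   the third vertex is p = q + (r - q) alpha with Im alpha <> 0.  Along the segment every
   continuous branch of the square root in the theorem is, up to a global sign, the explicit
   function canon_root alpha gamma s / (r - q), where c = q + (r - q) gamma.  Hence the
   integral is real iff the imaginary part of period alpha gamma, the integral of canon_root
   over (0,1), vanishes; this is independent of the branch.
   An interior point b has barycentric weight mu in (0,1) at p, and the line through b
   parallel to the side is gamma = mu alpha + x.  The function balance (the imaginary part of
   the period on that line, normalised by the sign of Im alpha) is strictly decreasing, since
   Im of the integrand is pointwise monotone along horizontal lines, continuous by a Lipschitz
   estimate, positive at x = 0 and negative at x = 1 - mu, where the triangle meets the line.
   The intermediate value theorem yields exactly one zero, located in the triangle. *)

lemma Im_via_csqrt: "Im z = 2 * Re (csqrt z) * Im (csqrt z)"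
proof -
  have "Im z = Im ((csqrt z)\<^sup>2)" by simp
  also have "\<dots> = 2 * Re (csqrt z) * Im (csqrt z)" by (simp add: power2_eq_square)
  finally show ?thesis .
qed

lemma Re_via_csqrt: "Re z = (Re (csqrt z))\<^sup>2 - (Im (csqrt z))\<^sup>2"
proof -
  have "Re z = Re ((csqrt z)\<^sup>2)" by simp
  also have "\<dots> = (Re (csqrt z))\<^sup>2 - (Im (csqrt z))\<^sup>2" by (simp add: power2_eq_square)
  finally show ?thesis .
qed

lemma csqrt_Re_pos:
  assumes "Im z \<noteq> 0" shows "Re (csqrt z) > 0"
  using csqrt_principal[of z] Im_via_csqrt[of z] assms by fastforce

lemma csqrt_Im_sign:
  assumes "Im z \<noteq> 0" shows "Im z * Im (csqrt z) > 0"
proof -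
  have "Im z * Im (csqrt z) = 2 * Re (csqrt z) * (Im (csqrt z))\<^sup>2"
    using Im_via_csqrt[of z] by (simp add: power2_eq_square)
  moreover have "Im (csqrt z) \<noteq> 0" using Im_via_csqrt[of z] assms by auto
  ultimately show ?thesis using csqrt_Re_pos[OF assms] by simp
qed

(* For z1, z2 in the same half plane, sqrt z1 * conj (sqrt z2) has positive real part and is
   a square root of z1 * conj z2; hence both have imaginary parts of the same sign. *)
lemma sgn_Im_csqrt_times_cnj:
  assumes "Im z1 * Im z2 > 0"
  shows "sgn (Im (csqrt z1 * cnj (csqrt z2))) = sgn (Im (z1 * cnj z2))"
proof -
  define v where "v = csqrt z1 * cnj (csqrt z2)"
  have "Im z1 \<noteq> 0" "Im z2 \<noteq> 0" using assms by auto
  hence "Re (csqrt z1) > 0" "Re (csqrt z2) > 0"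
    and "Im z1 * Im (csqrt z1) > 0" "Im z2 * Im (csqrt z2) > 0"
    using csqrt_Re_pos csqrt_Im_sign by auto
  hence "Im (csqrt z1) * Im (csqrt z2) > 0"
    using assms by (smt (verit) mult_neg_neg mult_pos_neg mult_pos_pos mult_neg_pos zero_less_mult_iff)
  hence Re_v: "Re v > 0" using \<open>Re (csqrt z1) > 0\<close> \<open>Re (csqrt z2) > 0\<close>
    by (simp add: v_def add_pos_pos)
  have "z1 * cnj z2 = v\<^sup>2" by (simp add: v_def power_mult_distrib flip: complex_cnj_power)
  hence "Im (z1 * cnj z2) = 2 * Re v * Im v" by (simp add: power2_eq_square)
  thus ?thesis using Re_v by (simp add: v_def sgn_mult)
qed

lemma csqrt_horizontal_mono:
  assumes "Im z = Im z'" "Re z < Re z'" "Im z \<noteq> 0"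
  shows "Re (csqrt z) < Re (csqrt z')" "Im z * (Im (csqrt z') - Im (csqrt z)) < 0"
proof -
  define p q p' q' where "p = Re (csqrt z)" "q = Im (csqrt z)" "p' = Re (csqrt z')" "q' = Im (csqrt z')"
  have pos: "p > 0" "p' > 0" using csqrt_Re_pos assms p_q_p'_q'_def by auto
  have Im_z: "Im z = 2*p*q" "Im z' = 2*p'*q'"
    using Im_via_csqrt p_q_p'_q'_def by auto
  have Re_z: "Re z = p\<^sup>2 - q\<^sup>2" "Re z' = p'\<^sup>2 - q'\<^sup>2"
    using Re_via_csqrt p_q_p'_q'_def by auto
  have same_Im: "p*q = p'*q'" using Im_z assms(1) by simp
  show lt: "p < p'"
  proof (rule ccontr)
    assume "\<not> p < p'"
    hence "p'\<^sup>2 \<le> p\<^sup>2" using pos by (simp add: power_mono)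
    moreover have "p\<^sup>2 * q\<^sup>2 = p'\<^sup>2 * q'\<^sup>2" using same_Im by (metis power_mult_distrib)
    ultimately have "p'\<^sup>2 * q\<^sup>2 \<le> p'\<^sup>2 * q'\<^sup>2" by (metis mult_right_mono zero_le_power2)
    hence "q\<^sup>2 \<le> q'\<^sup>2" using pos by simp
    thus False using Re_z assms(2) \<open>p'\<^sup>2 \<le> p\<^sup>2\<close> by linarith
  qed
  have "q' - q = q * (p - p') / p'" using same_Im pos by (simp add: field_simps)
  hence "Im z * (q' - q) = 2 * p * q\<^sup>2 * (p - p') / p'" using Im_z by (simp add: power2_eq_square)
  moreover have "q \<noteq> 0" using Im_z assms(3) by auto
  hence "2 * p * q\<^sup>2 * (p - p') / p' < 0" using pos lt by (simp add: mult_pos_neg divide_neg_pos)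
  ultimately show "Im z * (Im (csqrt z') - Im (csqrt z)) < 0" unfolding p_q_p'_q'_def by linarith
qed

(* A Lipschitz estimate for the principal root at a point off the real axis, from
   sqrt z1 - sqrt z2 = (z1 - z2) / (sqrt z1 + sqrt z2). *)
lemma csqrt_lipschitz:
  assumes "Im z1 \<noteq> 0" "cmod z1 \<le> K"
  shows "cmod (csqrt z1 - csqrt z2) \<le> 2 * sqrt K / \<bar>Im z1\<bar> * cmod (z1 - z2)"
proof -
  define w1 w2 where "w1 = csqrt z1" "w2 = csqrt z2"
  have Re_w1: "Re w1 > 0" unfolding w1_w2_def using csqrt_Re_pos assms(1) .
  have Re_w2: "Re w2 \<ge> 0" unfolding w1_w2_def using csqrt_principal[of z2] by linarith
  have "Im z1 = 2 * Re w1 * Im w1" unfolding w1_w2_def by (rule Im_via_csqrt)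
  hence "\<bar>Im z1\<bar> = 2 * Re w1 * \<bar>Im w1\<bar>" using Re_w1 by (simp add: abs_mult)
  also have "\<dots> \<le> 2 * Re w1 * cmod w1" using Re_w1 abs_Im_le_cmod[of w1] by simp
  also have "cmod w1 = sqrt (cmod z1)" unfolding w1_w2_def by (rule norm_csqrt)
  also have "2 * Re w1 * sqrt (cmod z1) \<le> 2 * Re w1 * sqrt K" using Re_w1 assms(2) by simp
  finally have Im_z1_le: "\<bar>Im z1\<bar> \<le> 2 * Re w1 * sqrt K" .
  have "(w1 - w2) * (w1 + w2) = z1 - z2"
    by (simp add: w1_w2_def algebra_simps flip: power2_eq_square)
  hence "cmod (w1 - w2) * cmod (w1 + w2) = cmod (z1 - z2)" by (metis norm_mult)
  moreover have "Re w1 \<le> cmod (w1 + w2)"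
    using Re_w2 complex_Re_le_cmod[of "w1 + w2"] by simp
  ultimately have Re_bound: "cmod (w1 - w2) * Re w1 \<le> cmod (z1 - z2)"
    by (metis mult_left_mono norm_ge_zero)
  have "sqrt K \<ge> 0" using order_trans[OF norm_ge_zero assms(2)] by simp
  have "cmod (w1 - w2) * \<bar>Im z1\<bar> \<le> cmod (w1 - w2) * (2 * Re w1 * sqrt K)"
    using Im_z1_le by (simp add: mult_left_mono)
  also have "\<dots> = 2 * sqrt K * (cmod (w1 - w2) * Re w1)" by (simp add: algebra_simps)
  also have "\<dots> \<le> 2 * sqrt K * cmod (z1 - z2)"
    using Re_bound \<open>sqrt K \<ge> 0\<close> by (simp add: mult_left_mono)
  finally have "cmod (w1 - w2) * \<bar>Im z1\<bar> \<le> 2 * sqrt K * cmod (z1 - z2)" .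
  thus ?thesis using assms(1) by (simp add: w1_w2_def field_simps)
qed

(* Normalised coordinates: the triangle is q, r, p = q + (r - q) alpha, a point is
   c = q + (r - q) gamma and the segment from q to r is t = q + s (r - q), 0 < s < 1.
   Then the radicand is (canon_root alpha gamma s / (r - q))^2 (see radicand_on_segment). *)
definition canon_root :: "complex \<Rightarrow> complex \<Rightarrow> real \<Rightarrow> complex" where
  "canon_root \<alpha> \<gamma> s = csqrt (\<gamma> - of_real s) / (csqrt (\<alpha> - of_real s) * of_real (sqrt (s * (1 - s))))"

(* Multiplying by the conjugate exhibits the sign of Im (canon_root alpha gamma s). *)
lemma canon_root_conj_form:
  "canon_root \<alpha> \<gamma> s = of_real (1 / (cmod (\<alpha> - of_real s) * sqrt (s * (1 - s))))
     * (csqrt (\<gamma> - of_real s) * cnj (csqrt (\<alpha> - of_real s)))"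
proof -
  define w where "w = csqrt (\<alpha> - of_real s)"
  define R where "R = (of_real (sqrt (s * (1 - s))) :: complex)"
  have "csqrt (\<gamma> - of_real s) / (w * R) = csqrt (\<gamma> - of_real s) * cnj w / ((w * cnj w) * R)"
    by (cases "w = 0"; cases "R = 0") (simp_all add: field_simps)
  also have "w * cnj w = of_real (cmod (\<alpha> - of_real s))"
    using complex_norm_square[of w] by (simp add: w_def norm_csqrt)
  finally show ?thesis by (simp add: canon_root_def w_def R_def field_simps)
qed

lemma Im_canon_root:
  "Im (canon_root \<alpha> \<gamma> s) = Im (csqrt (\<gamma> - of_real s) * cnj (csqrt (\<alpha> - of_real s)))
     / (cmod (\<alpha> - of_real s) * sqrt (s * (1 - s)))"
  unfolding canon_root_conj_form by simp

lemma canon_root_square: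
  assumes "Im \<alpha> \<noteq> 0" "0 < s" "s < 1"
  shows "(canon_root \<alpha> \<gamma> s)\<^sup>2 = (\<gamma> - of_real s) / ((\<alpha> - of_real s) * (of_real s * (1 - of_real s)))"
  using assms by (simp add: canon_root_def power_divide power_mult_distrib flip: of_real_power)

lemma canon_root_nonzero:
  assumes "Im \<alpha> \<noteq> 0" "Im \<gamma> \<noteq> 0" "0 < s" "s < 1"
  shows "canon_root \<alpha> \<gamma> s \<noteq> 0"
proof -
  have "\<gamma> - of_real s \<noteq> 0" "\<alpha> - of_real s \<noteq> 0" "sqrt (s * (1 - s)) \<noteq> 0"
    using assms by (auto simp: complex_eq_iff)
  thus ?thesis by (simp add: canon_root_def)
qed

(* Continuity on (0,1) holds because the principal root is continuous off the negative axis. *)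
lemma canon_root_continuous:
  assumes "Im \<alpha> \<noteq> 0" "Im \<gamma> \<noteq> 0"
  shows "continuous_on {0<..<1} (canon_root \<alpha> \<gamma>)"
proof -
  have csqrt_cont: "continuous_on {0<..<1} (\<lambda>s::real. csqrt (\<delta> - of_real s))" if "Im \<delta> \<noteq> 0" for \<delta>
    by (rule continuous_on_compose2[OF continuous_on_csqrt]) (use that in \<open>auto intro!: continuous_intros simp: complex_nonpos_Reals_iff\<close>)
  have "csqrt (\<alpha> - of_real s) * of_real (sqrt (s * (1 - s))) \<noteq> 0" if "s \<in> {0<..<1}" for s
  proof -
    have "\<alpha> - of_real s \<noteq> 0" using that assms(1) by (auto simp: complex_eq_iff)
    thus ?thesis using that by simp
  qed
  thus ?thesis unfolding canon_root_def[abs_def] using csqrt_cont assms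
    by (intro continuous_intros) auto
qed

(* The arcsine density dominates the canonical root up to a constant; its integral is pi. *)
definition arcsine_density :: "real \<Rightarrow> real" where
  "arcsine_density s = 1 / sqrt (s * (1 - s))"

lemma arcsine_density_has_integral: "(arcsine_density has_integral pi) {0<..<1}"
proof -
  have "(arcsine_density has_integral (arcsin (2 * 1 - 1) - arcsin (2 * 0 - 1))) {0..1}"
  proof (rule fundamental_theorem_of_calculus_interior)
    show "continuous_on {0..1} (\<lambda>s::real. arcsin (2 * s - 1))"
      by (intro continuous_intros) auto
    fix x :: real assume x: "x \<in> {0<..<1}"
    have "((\<lambda>s. arcsin (2 * s - 1)) has_real_derivative (inverse (sqrt (1 - (2 * x - 1)\<^sup>2)) * 2)) (at x)"
      using x by (intro DERIV_chain2[OF DERIV_arcsin] derivative_eq_intros) auto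
    moreover have "1 - (2 * x - 1)\<^sup>2 = 4 * (x * (1 - x))" by (simp add: power2_eq_square algebra_simps)
    hence "sqrt (1 - (2 * x - 1)\<^sup>2) = 2 * sqrt (x * (1 - x))" by (simp add: real_sqrt_mult)
    hence "inverse (sqrt (1 - (2 * x - 1)\<^sup>2)) * 2 = arcsine_density x"
      using x by (simp add: arcsine_density_def field_simps)
    ultimately show "((\<lambda>s. arcsin (2 * s - 1)) has_vector_derivative arcsine_density x) (at x)"
      by (simp add: has_real_derivative_iff_has_vector_derivative)
  qed simp
  thus ?thesis by (simp add: has_integral_Icc_iff_Ioo)
qed

(* Common estimate behind the domination and Lipschitz bounds, using |alpha - s| >= |Im alpha|. *)
lemma norm_over_root_bound:
  assumes "Im \<alpha> \<noteq> 0" "0 < s" "s < 1"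
  shows "norm (w / (csqrt (\<alpha> - of_real s) * of_real (sqrt (s * (1 - s)))))
           \<le> norm w / sqrt \<bar>Im \<alpha>\<bar> * arcsine_density s"
proof -
  have "sqrt \<bar>Im \<alpha>\<bar> \<le> sqrt (cmod (\<alpha> - of_real s))"
    using abs_Im_le_cmod[of "\<alpha> - of_real s"] by simp
  moreover have "sqrt \<bar>Im \<alpha>\<bar> > 0" and sqrt_pos: "sqrt (s * (1 - s)) > 0" using assms by auto
  ultimately have "norm w / (sqrt (cmod (\<alpha> - of_real s)) * sqrt (s * (1 - s)))
      \<le> norm w / (sqrt \<bar>Im \<alpha>\<bar> * sqrt (s * (1 - s)))"
    by (intro frac_le mult_pos_pos mult_right_mono) auto
  thus ?thesis using sqrt_pos by (simp add: norm_divide norm_mult norm_csqrt arcsine_density_def)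
qed

lemma canon_root_bound:
  assumes "Im \<alpha> \<noteq> 0" "0 < s" "s < 1"
  shows "norm (canon_root \<alpha> \<gamma> s) \<le> sqrt (cmod \<gamma> + 1) / sqrt \<bar>Im \<alpha>\<bar> * arcsine_density s"
proof -
  have "cmod (\<gamma> - of_real s) \<le> cmod \<gamma> + 1"
    using norm_triangle_ineq4[of \<gamma> "of_real s"] assms by simp
  hence "norm (csqrt (\<gamma> - of_real s)) \<le> sqrt (cmod \<gamma> + 1)" by (simp add: norm_csqrt)
  hence "norm (csqrt (\<gamma> - of_real s)) / sqrt \<bar>Im \<alpha>\<bar> * arcsine_density s
      \<le> sqrt (cmod \<gamma> + 1) / sqrt \<bar>Im \<alpha>\<bar> * arcsine_density s"
    using assms by (intro mult_right_mono divide_right_mono) (auto simp: arcsine_density_def)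
  thus ?thesis using norm_over_root_bound[OF assms] unfolding canon_root_def by (rule order_trans[rotated])
qed

lemma canon_root_lipschitz:
  assumes "Im \<alpha> \<noteq> 0" "0 < s" "s < 1" "Im \<gamma>1 \<noteq> 0" "cmod \<gamma>1 + 1 \<le> K"
  shows "norm (canon_root \<alpha> \<gamma>1 s - canon_root \<alpha> \<gamma>2 s)
           \<le> 2 * sqrt K / \<bar>Im \<gamma>1\<bar> / sqrt \<bar>Im \<alpha>\<bar> * cmod (\<gamma>1 - \<gamma>2) * arcsine_density s"
proof -
  have "cmod (\<gamma>1 - of_real s) \<le> K"
    using norm_triangle_ineq4[of \<gamma>1 "of_real s"] assms by simp
  hence "norm (csqrt (\<gamma>1 - of_real s) - csqrt (\<gamma>2 - of_real s))
      \<le> 2 * sqrt K / \<bar>Im \<gamma>1\<bar> * cmod (\<gamma>1 - \<gamma>2)"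
    using csqrt_lipschitz[of "\<gamma>1 - of_real s" K "\<gamma>2 - of_real s"] assms(4) by simp
  hence "norm (csqrt (\<gamma>1 - of_real s) - csqrt (\<gamma>2 - of_real s)) / sqrt \<bar>Im \<alpha>\<bar> * arcsine_density s
      \<le> 2 * sqrt K / \<bar>Im \<gamma>1\<bar> * cmod (\<gamma>1 - \<gamma>2) / sqrt \<bar>Im \<alpha>\<bar> * arcsine_density s"
    using assms by (intro mult_right_mono divide_right_mono) (auto simp: arcsine_density_def)
  moreover have "canon_root \<alpha> \<gamma>1 s - canon_root \<alpha> \<gamma>2 s
      = (csqrt (\<gamma>1 - of_real s) - csqrt (\<gamma>2 - of_real s)) / (csqrt (\<alpha> - of_real s) * of_real (sqrt (s * (1 - s))))"
    unfolding canon_root_def by (rule diff_divide_distrib[symmetric])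
  ultimately show ?thesis
    using norm_over_root_bound[OF assms(1-3), of "csqrt (\<gamma>1 - of_real s) - csqrt (\<gamma>2 - of_real s)"]
    by (simp add: mult_ac)
qed

lemma canon_root_integrable:
  assumes "Im \<alpha> \<noteq> 0" "Im \<gamma> \<noteq> 0"
  shows "canon_root \<alpha> \<gamma> integrable_on {0<..<1}"
proof (rule measurable_bounded_by_integrable_imp_integrable)
  show "canon_root \<alpha> \<gamma> \<in> borel_measurable (lebesgue_on {0<..<1})"
    by (rule continuous_imp_measurable_on_sets_lebesgue[OF canon_root_continuous[OF assms]]) simp
  show "(\<lambda>s. sqrt (cmod \<gamma> + 1) / sqrt \<bar>Im \<alpha>\<bar> * arcsine_density s) integrable_on {0<..<1}"
    using arcsine_density_has_integral by (intro integrable_on_mult_right) blast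
  show "norm (canon_root \<alpha> \<gamma> s) \<le> sqrt (cmod \<gamma> + 1) / sqrt \<bar>Im \<alpha>\<bar> * arcsine_density s"
    if "s \<in> {0<..<1}" for s
    using canon_root_bound[OF assms(1)] that by simp
qed simp

lemma sgn_Im_canon_root_on_line:
  assumes "Im \<alpha> \<noteq> 0" "0 < \<mu>" "0 < s" "s < 1"
  shows "sgn (Im \<alpha> * Im (canon_root \<alpha> (of_real \<mu> * \<alpha> + of_real x) s)) = sgn (s * (1 - \<mu>) - x)"
proof -
  define \<gamma> where "\<gamma> = of_real \<mu> * \<alpha> + of_real x"
  define X where "X = Im (csqrt (\<gamma> - of_real s) * cnj (csqrt (\<alpha> - of_real s)))"
  define D where "D = cmod (\<alpha> - of_real s) * sqrt (s * (1 - s))"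
  have "D > 0" using assms by (auto simp: D_def complex_eq_iff)
  have "Im (\<gamma> - of_real s) * Im (\<alpha> - of_real s) = \<mu> * (Im \<alpha>)\<^sup>2"
    by (simp add: \<gamma>_def power2_eq_square)
  hence "Im (\<gamma> - of_real s) * Im (\<alpha> - of_real s) > 0" using assms(1,2) by simp
  hence "sgn X = sgn (Im ((\<gamma> - of_real s) * cnj (\<alpha> - of_real s)))"
    unfolding X_def by (rule sgn_Im_csqrt_times_cnj)
  also have "Im ((\<gamma> - of_real s) * cnj (\<alpha> - of_real s)) = Im \<alpha> * (s * (1 - \<mu>) - x)"
    by (simp add: \<gamma>_def algebra_simps)
  finally have sgn_X: "sgn X = sgn (Im \<alpha>) * sgn (s * (1 - \<mu>) - x)" by (simp only: sgn_mult)
  have "sgn (Im \<alpha>) * sgn (Im \<alpha>) = 1" using assms(1) by (simp flip: sgn_mult)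
  moreover have "Im (canon_root \<alpha> \<gamma> s) = X / D" unfolding Im_canon_root X_def D_def ..
  ultimately show ?thesis using \<open>D > 0\<close> sgn_X by (simp add: \<gamma>_def[symmetric] sgn_mult sgn_divide)
qed

lemma sign_transfer:
  fixes a b x :: real
  assumes "a * b > 0" "a * x < 0"
  shows "b * x < 0"
  using assms by (auto simp: zero_less_mult_iff mult_less_0_iff)

lemma Im_canon_root_horizontal_mono:
  assumes "Im \<alpha> \<noteq> 0" "0 < s" "s < 1"
    and "Im \<gamma>1 = Im \<gamma>2" "Im \<gamma>1 * Im \<alpha> > 0" "Re \<gamma>1 < Re \<gamma>2"
  shows "Im \<alpha> * Im (canon_root \<alpha> \<gamma>2 s) < Im \<alpha> * Im (canon_root \<alpha> \<gamma>1 s)"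
proof -
  define z1 z2 where "z1 = \<gamma>1 - of_real s" "z2 = \<gamma>2 - of_real s"
  define R1 I1 R2 I2 where "R1 = Re (csqrt z1)" "I1 = Im (csqrt z1)" "R2 = Re (csqrt z2)" "I2 = Im (csqrt z2)"
  define Rw Iw where "Rw = Re (csqrt (\<alpha> - of_real s))" "Iw = Im (csqrt (\<alpha> - of_real s))"
  define D where "D = cmod (\<alpha> - of_real s) * sqrt (s * (1 - s))"
  have "D > 0" using assms by (auto simp: D_def complex_eq_iff)
  have horizontal: "Im z1 = Im z2" "Re z1 < Re z2" "Im z1 \<noteq> 0" using assms by (auto simp: z1_z2_def)
  have "Im z1 * Im \<alpha> > 0" using assms(5) by (simp add: z1_z2_def)
  hence Im_anti: "Im \<alpha> * (I2 - I1) < 0"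
    using csqrt_horizontal_mono(2)[OF horizontal] unfolding R1_I1_R2_I2_def by (rule sign_transfer)
  have Re_mono: "R1 < R2" using csqrt_horizontal_mono(1)[OF horizontal] by (simp add: R1_I1_R2_I2_def)
  have "Rw > 0" "Im \<alpha> * Iw > 0"
    using csqrt_Re_pos[of "\<alpha> - of_real s"] csqrt_Im_sign[of "\<alpha> - of_real s"] assms(1)
    by (simp_all add: Rw_Iw_def)
  have "Im \<alpha> * (I2 * Rw - R2 * Iw) - Im \<alpha> * (I1 * Rw - R1 * Iw)
      = (Im \<alpha> * (I2 - I1)) * Rw - (R2 - R1) * (Im \<alpha> * Iw)" by (simp add: algebra_simps)
  also have "\<dots> < 0"
  proof -
    have "(Im \<alpha> * (I2 - I1)) * Rw < 0" using Im_anti \<open>Rw > 0\<close> by (rule mult_neg_pos)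
    moreover have "(R2 - R1) * (Im \<alpha> * Iw) > 0" using Re_mono \<open>Im \<alpha> * Iw > 0\<close> by simp
    ultimately show ?thesis by linarith
  qed
  finally have "Im \<alpha> * (I2 * Rw - R2 * Iw) / D < Im \<alpha> * (I1 * Rw - R1 * Iw) / D"
    using \<open>D > 0\<close> by (simp add: divide_strict_right_mono)
  thus ?thesis by (simp add: Im_canon_root z1_z2_def R1_I1_R2_I2_def Rw_Iw_def D_def)
qed

(* The integral of the canonical root; the segment integral of the theorem is a nonzero
   multiple of it, and it is real exactly when Im (period alpha gamma) = 0. *)
definition period :: "complex \<Rightarrow> complex \<Rightarrow> complex" where
  "period \<alpha> \<gamma> = integral {0<..<1} (canon_root \<alpha> \<gamma>)"

lemma period_has_integral:
  assumes "Im \<alpha> \<noteq> 0" "Im \<gamma> \<noteq> 0"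
  shows "(canon_root \<alpha> \<gamma> has_integral period \<alpha> \<gamma>) {0<..<1}"
  unfolding period_def using canon_root_integrable[OF assms] by blast

lemma period_lipschitz:
  assumes "Im \<alpha> \<noteq> 0" "Im \<gamma>1 \<noteq> 0" "Im \<gamma>2 \<noteq> 0" "cmod \<gamma>1 + 1 \<le> K"
  shows "norm (period \<alpha> \<gamma>1 - period \<alpha> \<gamma>2)
           \<le> 2 * sqrt K / \<bar>Im \<gamma>1\<bar> / sqrt \<bar>Im \<alpha>\<bar> * cmod (\<gamma>1 - \<gamma>2) * pi"
proof -
  define C where "C = 2 * sqrt K / \<bar>Im \<gamma>1\<bar> / sqrt \<bar>Im \<alpha>\<bar> * cmod (\<gamma>1 - \<gamma>2)"
  have diff: "((\<lambda>s. canon_root \<alpha> \<gamma>1 s - canon_root \<alpha> \<gamma>2 s) has_integral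
      period \<alpha> \<gamma>1 - period \<alpha> \<gamma>2) {0<..<1}"
    using period_has_integral assms by (intro has_integral_diff) auto
  have dominant: "((\<lambda>s. C * arcsine_density s) has_integral C * pi) {0<..<1}"
    using arcsine_density_has_integral by (rule has_integral_mult_right)
  have "norm (canon_root \<alpha> \<gamma>1 s - canon_root \<alpha> \<gamma>2 s) \<le> C * arcsine_density s"
    if "s \<in> {0<..<1}" for s
    using canon_root_lipschitz[OF assms(1) _ _ assms(2,4)] that by (simp add: C_def)
  hence "norm (period \<alpha> \<gamma>1 - period \<alpha> \<gamma>2) \<le> C * pi"
    using integral_norm_bound_integral[OF has_integral_integrable[OF diff] has_integral_integrable[OF dominant]]
    unfolding integral_unique[OF diff] integral_unique[OF dominant] by blast
  thus ?thesis by (simp add: C_def)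
qed

lemma integral_pos_Ioo:
  fixes f :: "real \<Rightarrow> real"
  assumes "(f has_integral I) {0<..<1}" "continuous_on {0<..<1} f" "\<And>s. s \<in> {0<..<1} \<Longrightarrow> 0 < f s"
  shows "0 < I"
proof -
  have sub: "{1/4..3/4::real} \<subseteq> {0<..<1}" by auto
  have cont: "continuous_on {1/4..3/4} f" using continuous_on_subset[OF assms(2) sub] .
  have "integral {1/4..3/4::real} (\<lambda>s. 0) < integral {1/4..3/4} f"
    by (rule integral_less_real) (use cont assms(3) sub in auto)
  also have "integral {1/4..3/4} f \<le> I"
    using integral_subset_le[OF sub integrable_continuous_real[OF cont]] assms(1,3)
    by (metis has_integral_integrable_integral less_imp_le)
  finally show ?thesis by simp
qed

(* The imaginary part of the period along the line gamma = mu alpha + x, normalised by the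
   sign of Im alpha; its zeros are exactly the points where the integral is real. *)
definition balance :: "complex \<Rightarrow> real \<Rightarrow> real \<Rightarrow> real" where
  "balance \<alpha> \<mu> x = Im \<alpha> * Im (period \<alpha> (of_real \<mu> * \<alpha> + of_real x))"

lemma balance_has_integral:
  assumes "Im \<alpha> \<noteq> 0" "0 < \<mu>"
  shows "((\<lambda>s. Im \<alpha> * Im (canon_root \<alpha> (of_real \<mu> * \<alpha> + of_real x) s)) has_integral balance \<alpha> \<mu> x) {0<..<1}"
proof -
  have "(canon_root \<alpha> (of_real \<mu> * \<alpha> + of_real x) has_integral period \<alpha> (of_real \<mu> * \<alpha> + of_real x)) {0<..<1}"
    using assms by (intro period_has_integral) auto
  from has_integral_linear[OF this bounded_linear_Im] show ?thesis
    unfolding balance_def o_def by (rule has_integral_mult_right)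
qed

lemma balance_integrand_continuous:
  assumes "Im \<alpha> \<noteq> 0" "0 < \<mu>"
  shows "continuous_on {0<..<1} (\<lambda>s. Im \<alpha> * Im (canon_root \<alpha> (of_real \<mu> * \<alpha> + of_real x) s))"
  using canon_root_continuous[of \<alpha> "of_real \<mu> * \<alpha> + of_real x"] assms by (intro continuous_intros) auto

(* Integrating the pointwise monotonicity: balance is strictly decreasing in x. *)
lemma balance_strict_decreasing:
  assumes "Im \<alpha> \<noteq> 0" "0 < \<mu>" "x1 < x2"
  shows "balance \<alpha> \<mu> x2 < balance \<alpha> \<mu> x1"
proof -
  let ?f = "\<lambda>x s. Im \<alpha> * Im (canon_root \<alpha> (of_real \<mu> * \<alpha> + of_real x) s)"
  have "0 < balance \<alpha> \<mu> x1 - balance \<alpha> \<mu> x2"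
  proof (rule integral_pos_Ioo)
    show "((\<lambda>s. ?f x1 s - ?f x2 s) has_integral balance \<alpha> \<mu> x1 - balance \<alpha> \<mu> x2) {0<..<1}"
      using balance_has_integral[OF assms(1,2)] by (intro has_integral_diff)
    show "continuous_on {0<..<1} (\<lambda>s. ?f x1 s - ?f x2 s)"
      using balance_integrand_continuous[OF assms(1,2)] by (intro continuous_on_diff)
    have "Im \<alpha> * (\<mu> * Im \<alpha>) = \<mu> * (Im \<alpha>)\<^sup>2" by (simp add: power2_eq_square)
    also have "\<dots> > 0" using assms(1,2) by simp
    finally have "Im \<alpha> * (\<mu> * Im \<alpha>) > 0" .
    thus "0 < ?f x1 s - ?f x2 s" if "s \<in> {0<..<1}" for s
      using Im_canon_root_horizontal_mono[OF assms(1), of s "of_real \<mu> * \<alpha> + of_real x1"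
          "of_real \<mu> * \<alpha> + of_real x2"] that assms(3) by (auto simp: mult.commute)
  qed
  thus ?thesis by simp
qed

(* At x = 0 (the side from q to p) the balance is positive, at x = 1 - mu (the side from p to r)
   negative, by the sign computation on the line. *)
lemma balance_endpoint_signs:
  assumes "Im \<alpha> \<noteq> 0" "0 < \<mu>" "\<mu> < 1"
  shows "balance \<alpha> \<mu> 0 > 0" "balance \<alpha> \<mu> (1 - \<mu>) < 0"
proof -
  let ?f = "\<lambda>x s. Im \<alpha> * Im (canon_root \<alpha> (of_real \<mu> * \<alpha> + of_real x) s)"
  have sgn_f: "sgn (?f x s) = sgn (s * (1 - \<mu>) - x)" if "s \<in> {0<..<1}" for x s
    using sgn_Im_canon_root_on_line[OF assms(1,2)] that by auto
  show "balance \<alpha> \<mu> 0 > 0"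
  proof (rule integral_pos_Ioo)
    show "(?f 0 has_integral balance \<alpha> \<mu> 0) {0<..<1}" by (rule balance_has_integral[OF assms(1,2)])
    show "continuous_on {0<..<1} (?f 0)" by (rule balance_integrand_continuous[OF assms(1,2)])
    show "0 < ?f 0 s" if "s \<in> {0<..<1}" for s
      using sgn_f[OF that, of 0] that assms(3) by (simp add: sgn_1_pos)
  qed
  have "0 < - balance \<alpha> \<mu> (1 - \<mu>)"
  proof (rule integral_pos_Ioo)
    show "((\<lambda>s. - ?f (1 - \<mu>) s) has_integral - balance \<alpha> \<mu> (1 - \<mu>)) {0<..<1}"
      by (rule has_integral_neg[OF balance_has_integral[OF assms(1,2)]])
    show "continuous_on {0<..<1} (\<lambda>s. - ?f (1 - \<mu>) s)"
      by (rule continuous_on_minus[OF balance_integrand_continuous[OF assms(1,2)]])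
    fix s :: real assume s: "s \<in> {0<..<1}"
    have "s * (1 - \<mu>) - (1 - \<mu>) = - ((1 - s) * (1 - \<mu>))" by (simp add: algebra_simps)
    moreover have "(1 - s) * (1 - \<mu>) > 0" using s assms(3) by simp
    ultimately show "0 < - ?f (1 - \<mu>) s" using sgn_f[OF s, of "1 - \<mu>"] by (simp add: sgn_1_neg)
  qed
  thus "balance \<alpha> \<mu> (1 - \<mu>) < 0" by simp
qed

lemma balance_continuous:
  assumes "Im \<alpha> \<noteq> 0" "0 < \<mu>" "\<mu> < 1"
  shows "continuous_on {0..1 - \<mu>} (balance \<alpha> \<mu>)"
proof (rule lipschitz_on_continuous_on)
  define K where "K = cmod \<alpha> + 2"
  define L where "L = \<bar>Im \<alpha>\<bar> * (2 * sqrt K / \<bar>\<mu> * Im \<alpha>\<bar> / sqrt \<bar>Im \<alpha>\<bar> * pi)"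
  show "L-lipschitz_on {0..1 - \<mu>} (balance \<alpha> \<mu>)"
  proof (rule lipschitz_onI)
    show "0 \<le> L" by (simp add: L_def K_def)
    fix x1 x2 assume x1: "x1 \<in> {0..1 - \<mu>}" and x2: "x2 \<in> {0..1 - \<mu>}"
    define \<gamma>1 \<gamma>2 where "\<gamma>1 = of_real \<mu> * \<alpha> + of_real x1" "\<gamma>2 = of_real \<mu> * \<alpha> + of_real x2"
    have Im_\<gamma>: "Im \<gamma>1 = \<mu> * Im \<alpha>" "Im \<gamma>2 = \<mu> * Im \<alpha>" by (simp_all add: \<gamma>1_\<gamma>2_def)
    have "cmod \<gamma>1 \<le> \<mu> * cmod \<alpha> + x1"
      using norm_triangle_ineq[of "of_real \<mu> * \<alpha>" "of_real x1"] x1 assms(2)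
      by (simp add: \<gamma>1_\<gamma>2_def norm_mult)
    moreover have "\<mu> * cmod \<alpha> \<le> cmod \<alpha>" by (rule mult_left_le_one_le) (use assms(2,3) in auto)
    ultimately have "cmod \<gamma>1 + 1 \<le> K" using x1 assms(2) by (simp add: K_def)
    hence period_bound: "norm (period \<alpha> \<gamma>1 - period \<alpha> \<gamma>2)
        \<le> 2 * sqrt K / \<bar>\<mu> * Im \<alpha>\<bar> / sqrt \<bar>Im \<alpha>\<bar> * \<bar>x1 - x2\<bar> * pi"
      using period_lipschitz[OF assms(1), of \<gamma>1 \<gamma>2 K] assms(1,2) Im_\<gamma>
      by (simp add: \<gamma>1_\<gamma>2_def flip: of_real_diff)
    have "dist (balance \<alpha> \<mu> x1) (balance \<alpha> \<mu> x2) = \<bar>Im \<alpha>\<bar> * \<bar>Im (period \<alpha> \<gamma>1 - period \<alpha> \<gamma>2)\<bar>"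
      by (simp add: balance_def dist_real_def \<gamma>1_\<gamma>2_def abs_mult flip: right_diff_distrib)
    also have "\<dots> \<le> \<bar>Im \<alpha>\<bar> * norm (period \<alpha> \<gamma>1 - period \<alpha> \<gamma>2)"
      by (intro mult_left_mono abs_Im_le_cmod) simp
    also have "\<dots> \<le> \<bar>Im \<alpha>\<bar> * (2 * sqrt K / \<bar>\<mu> * Im \<alpha>\<bar> / sqrt \<bar>Im \<alpha>\<bar> * \<bar>x1 - x2\<bar> * pi)"
      using period_bound by (rule mult_left_mono) simp
    also have "\<dots> = L * dist x1 x2" by (simp add: L_def dist_real_def)
    finally show "dist (balance \<alpha> \<mu> x1) (balance \<alpha> \<mu> x2) \<le> L * dist x1 x2" .
  qed
qed

lemma balance_unique_zero:
  assumes "Im \<alpha> \<noteq> 0" "0 < \<mu>" "\<mu> < 1"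
  shows "\<exists>x\<in>{0..1 - \<mu>}. balance \<alpha> \<mu> x = 0 \<and> (\<forall>y. balance \<alpha> \<mu> y = 0 \<longrightarrow> y = x)"
proof -
  obtain x where x: "x \<in> {0..1 - \<mu>}" "balance \<alpha> \<mu> x = 0"
    using IVT2'[of "balance \<alpha> \<mu>" "1 - \<mu>" 0 0] balance_endpoint_signs[OF assms]
      balance_continuous[OF assms] assms(3) by auto
  have "y = x" if "balance \<alpha> \<mu> y = 0" for y
    using balance_strict_decreasing[OF assms(1,2), of x y] balance_strict_decreasing[OF assms(1,2), of y x]
      that x(2) by (cases x y rule: linorder_cases) auto
  thus ?thesis using x by blast
qed

lemma index_triple_cases:
  assumes "{i, j, k} = {1, 2, 3::nat}"
  shows "(i, j, k) \<in> {(1,2,3), (1,3,2), (2,1,3), (2,3,1), (3,1,2), (3,2,1)}"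
proof -
  have "card {i, j, k} = 3" using assms by simp
  hence "i \<noteq> j" "i \<noteq> k" "j \<noteq> k" by (auto simp: card_insert_if split: if_splits)
  moreover have "i \<in> {1,2,3}" "j \<in> {1,2,3}" "k \<in> {1,2,3}" using assms by blast+
  ultimately show ?thesis by auto
qed

lemma vertices_permuted:
  assumes "{i, j, k} = {1, 2, 3::nat}"
  shows "{a 1, a 2, a 3} = {a i, a j, a k}"
  using index_triple_cases[OF assms] by (elim insertE; simp add: insert_commute)

lemma radicand_permuted:
  assumes "{i, j, k} = {1, 2, 3::nat}"
  shows "radicand a c t = (c - t) / ((t - a i) * (t - a j) * (t - a k))"
proof -
  have "(t - a 1) * (t - a 2) * (t - a 3) = (t - a i) * (t - a j) * (t - a k)"
    using index_triple_cases[OF assms] by (elim insertE; simp add: mult_ac)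
  thus ?thesis by (simp add: radicand_def)
qed

(* Two continuous square roots of the same function, one of them nonvanishing, agree up to a
   global sign on a connected set: the quotient is continuous with values in {1, -1}. *)
lemma continuous_roots_agree_up_to_sign:
  fixes f g :: "'a::topological_space \<Rightarrow> complex"
  assumes "connected S" "continuous_on S f" "continuous_on S g"
    and nonzero: "\<And>x. x \<in> S \<Longrightarrow> f x \<noteq> 0" and square: "\<And>x. x \<in> S \<Longrightarrow> (g x)\<^sup>2 = (f x)\<^sup>2"
  shows "\<exists>c\<in>{1, -1}. \<forall>x\<in>S. g x = c * f x"
proof (cases "S = {}")
  case False
  define h where "h x = g x / f x" for x
  have h_sign: "h x \<in> {1, -1}" if "x \<in> S" for x
  proof -
    have "(h x)\<^sup>2 = 1" using nonzero[OF that] square[OF that] by (simp add: h_def power_divide)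
    thus ?thesis by (simp add: power2_eq_1_iff)
  qed
  have "continuous_on S h" unfolding h_def using assms(2,3) nonzero by (intro continuous_on_divide) auto
  moreover have "finite (h ` S)" by (rule finite_subset[of _ "{1, -1}"]) (use h_sign in auto)
  ultimately have "h constant_on S" using assms(1) by (intro continuous_finite_range_constant)
  then obtain c where c: "\<And>x. x \<in> S \<Longrightarrow> h x = c" unfolding constant_on_def by blast
  obtain x0 where "x0 \<in> S" using False by blast
  hence "c \<in> {1, -1}" using c h_sign by blast
  moreover have "g x = c * f x" if "x \<in> S" for x
    using c[OF that] nonzero[OF that] by (simp add: h_def field_simps)
  ultimately show ?thesis by blast
qed auto

lemma radicand_on_segment:
  assumes "{i, j, k} = {1, 2, 3::nat}" "a i = a j + (a k - a j) * \<alpha>" "c = a j + (a k - a j) * \<gamma>"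
    and "Im \<alpha> \<noteq> 0" "0 < s" "s < 1"
  shows "radicand a c (a j + of_real s * (a k - a j)) = (canon_root \<alpha> \<gamma> s / (a k - a j))\<^sup>2"
proof -
  define D S where "D = a k - a j" "S = (of_real s :: complex)"
  have "c - (a j + S * D) = D * (\<gamma> - S)" "(a j + S * D) - a i = D * (S - \<alpha>)"
    "(a j + S * D) - a j = D * S" "(a j + S * D) - a k = D * (S - 1)"
    using assms(2,3) by (simp_all add: D_S_def algebra_simps)
  hence "radicand a c (a j + S * D) = D * (\<gamma> - S) / (D * (S - \<alpha>) * (D * S) * (D * (S - 1)))"
    unfolding radicand_permuted[OF assms(1)] by simp
  also have "D * (S - \<alpha>) * (D * S) * (D * (S - 1)) = D * (D\<^sup>2 * ((\<alpha> - S) * (S * (1 - S))))"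
    by (simp add: algebra_simps power2_eq_square)
  also have "D * (\<gamma> - S) / \<dots> = (\<gamma> - S) / ((\<alpha> - S) * (S * (1 - S))) / D\<^sup>2"
    by (cases "D = 0") (simp_all add: divide_divide_eq_left mult.commute)
  also have "\<dots> = (canon_root \<alpha> \<gamma> s / D)\<^sup>2"
    using canon_root_square[OF assms(4-6)] by (simp add: D_S_def power_divide)
  finally show ?thesis by (simp add: D_S_def)
qed

(* Branch independence: any admissible branch is +- canon_root / (a k - a j), so the segment
   integral is real iff the period has vanishing imaginary part. *)
lemma segment_integral_real_iff:
  assumes "{i, j, k} = {1, 2, 3::nat}" "a k \<noteq> a j"
    and "a i = a j + (a k - a j) * \<alpha>" "c = a j + (a k - a j) * \<gamma>" "Im \<alpha> \<noteq> 0" "Im \<gamma> \<noteq> 0"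
  shows "segment_integral_real a j k c \<longleftrightarrow> Im (period \<alpha> \<gamma>) = 0"
proof -
  define D where "D = a k - a j"
  define G where "G s = canon_root \<alpha> \<gamma> s / D" for s
  have "D \<noteq> 0" using assms(2) by (simp add: D_def)
  have G_root: "(G s)\<^sup>2 = radicand a c (a j + of_real s * D)" if "s \<in> {0<..<1}" for s
    using radicand_on_segment[OF assms(1,3,4,5)] that by (simp add: G_def D_def)
  have G_cont: "continuous_on {0<..<1} G"
    unfolding G_def using canon_root_continuous[OF assms(5,6)] \<open>D \<noteq> 0\<close>
    by (intro continuous_intros) auto
  have G_nonzero: "G s \<noteq> 0" if "s \<in> {0<..<1}" for s
    using canon_root_nonzero[OF assms(5,6)] that \<open>D \<noteq> 0\<close> by (simp add: G_def)
  have G_integral: "((\<lambda>s. G s * D) has_integral period \<alpha> \<gamma>) {0<..<1}"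
    using period_has_integral[OF assms(5,6)] \<open>D \<noteq> 0\<close> by (simp add: G_def)
  show ?thesis
  proof
    assume "segment_integral_real a j k c"
    then obtain g I where g_cont: "continuous_on {0<..<1} g"
      and g_root: "\<forall>s\<in>{0<..<1::real}. (g s)\<^sup>2 = radicand a c (a j + of_real s * D)"
      and g_integral: "((\<lambda>s. g s * D) has_integral I) {0..1}" and "I \<in> \<real>"
      unfolding segment_integral_real_def D_def by blast
    have "\<exists>\<sigma>\<in>{1, -1}. \<forall>s\<in>{0<..<1}. g s = \<sigma> * G s"
      by (rule continuous_roots_agree_up_to_sign) (use G_cont g_cont G_nonzero G_root g_root in auto)
    then obtain \<sigma> where "\<sigma> \<in> {1, -1}" and \<sigma>: "\<forall>s\<in>{0<..<1}. g s = \<sigma> * G s" by blast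
    have "((\<lambda>s. g s * D) has_integral I) {0<..<1}"
      using g_integral by (simp add: has_integral_Icc_iff_Ioo)
    moreover have "((\<lambda>s. g s * D) has_integral \<sigma> * period \<alpha> \<gamma>) {0<..<1}"
      by (rule has_integral_eq[OF _ has_integral_mult_right[OF G_integral, of \<sigma>]]) (simp add: \<sigma>)
    ultimately have "I = \<sigma> * period \<alpha> \<gamma>" by (rule has_integral_unique)
    thus "Im (period \<alpha> \<gamma>) = 0" using \<open>I \<in> \<real>\<close> \<open>\<sigma> \<in> {1, -1}\<close> by (auto simp: complex_is_Real_iff)
  next
    assume "Im (period \<alpha> \<gamma>) = 0"
    hence "period \<alpha> \<gamma> \<in> \<real>" by (simp add: complex_is_Real_iff)
    moreover have "((\<lambda>s. G s * D) has_integral period \<alpha> \<gamma>) {0..1}"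
      using G_integral by (simp add: has_integral_Icc_iff_Ioo)
    ultimately show "segment_integral_real a j k c"
      unfolding segment_integral_real_def D_def[symmetric] using G_cont G_root by blast
  qed
qed

(* Barycentric coordinates of an interior point b: the line through b parallel to the side
   from q to r is q + (r - q) (mu alpha + x) with 0 < mu < 1 the weight of the vertex p. *)
lemma triangle_line_coordinates:
  fixes p q r b :: complex
  assumes noncollinear: "\<not> collinear {p, q, r}" and interior: "b \<in> interior (convex hull {p, q, r})"
  obtains \<alpha> \<mu> x0 where "r \<noteq> q" "Im \<alpha> \<noteq> 0" "p = q + (r - q) * \<alpha>" "0 < \<mu>" "\<mu> < 1"
    "b = q + (r - q) * (of_real \<mu> * \<alpha> + of_real x0)"
proof -
  have distinct: "p \<noteq> q" "p \<noteq> r" "q \<noteq> r" using noncollinear by (auto simp: collinear_2 insert_commute)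
  define \<alpha> where "\<alpha> = (p - q) / (r - q)"
  have p_eq: "p = q + (r - q) * \<alpha>" using distinct by (simp add: \<alpha>_def)
  have "Im \<alpha> \<noteq> 0"
  proof
    assume "Im \<alpha> = 0"
    hence "\<alpha> = of_real (Re \<alpha>)" by (simp add: complex_eq_iff)
    hence "p = Re \<alpha> *\<^sub>R r + (1 - Re \<alpha>) *\<^sub>R q" using p_eq by (simp add: scaleR_conv_of_real algebra_simps)
    hence "collinear {r, p, q}" unfolding collinear_3_expand by blast
    thus False using noncollinear by (simp add: insert_commute)
  qed
  have independent: "\<not> affine_dependent {p, q, r}"
    using noncollinear distinct collinear_3_eq_affine_dependent by blast
  have card: "card {p, q, r} = 3" using distinct by simp
  obtain u where u_pos: "\<forall>x\<in>{p, q, r}. 0 < u x" and u_sum: "sum u {p, q, r} = 1"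
    and u_b: "(\<Sum>x\<in>{p, q, r}. u x *\<^sub>R x) = b"
    using interior unfolding interior_convex_hull_explicit_minimal[OF independent] card by auto
  have u_total: "u p + u q + u r = 1" using u_sum distinct by (simp add: add.assoc)
  have "b = u p *\<^sub>R p + u q *\<^sub>R q + u r *\<^sub>R r" using u_b distinct by (simp add: add.assoc)
  also have "u q = 1 - u p - u r" using u_total by simp
  also have "u p *\<^sub>R p + (1 - u p - u r) *\<^sub>R q + u r *\<^sub>R r
      = q + of_real (u p) * (p - q) + of_real (u r) * (r - q)"
    by (simp add: scaleR_conv_of_real algebra_simps)
  also have "p - q = (r - q) * \<alpha>" using p_eq by simp
  also have "q + of_real (u p) * ((r - q) * \<alpha>) + of_real (u r) * (r - q)
      = q + (r - q) * (of_real (u p) * \<alpha> + of_real (u r))" by (simp add: algebra_simps)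
  finally have "b = q + (r - q) * (of_real (u p) * \<alpha> + of_real (u r))" .
  moreover have "0 < u p" "u p < 1" using u_pos u_total by auto
  ultimately show ?thesis using that distinct(3) \<open>Im \<alpha> \<noteq> 0\<close> p_eq by (metis (lifting))
qed

lemma parallel_line_reparam:
  fixes q D \<alpha> b :: complex
  assumes "b = q + D * (of_real \<mu> * \<alpha> + of_real x0)"
  shows "{b + of_real s * D | s. True} = range (\<lambda>x. q + D * (of_real \<mu> * \<alpha> + of_real x))"
proof (intro set_eqI iffI)
  fix c assume "c \<in> {b + of_real s * D | s. True}"
  then obtain s where "c = b + of_real s * D" by blast
  hence "c = q + D * (of_real \<mu> * \<alpha> + of_real (x0 + s))" by (simp add: assms algebra_simps)
  thus "c \<in> range (\<lambda>x. q + D * (of_real \<mu> * \<alpha> + of_real x))" by blast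
next
  fix c assume "c \<in> range (\<lambda>x. q + D * (of_real \<mu> * \<alpha> + of_real x))"
  then obtain x where "c = q + D * (of_real \<mu> * \<alpha> + of_real x)" by blast
  hence "c = b + of_real (x - x0) * D" by (simp add: assms algebra_simps)
  thus "c \<in> {b + of_real s * D | s. True}" by blast
qed

lemma triangle_point_in_hull:
  fixes p q r \<alpha> :: complex
  assumes "p = q + (r - q) * \<alpha>" "0 \<le> \<mu>" "0 \<le> x" "\<mu> + x \<le> 1"
  shows "q + (r - q) * (of_real \<mu> * \<alpha> + of_real x) \<in> convex hull {p, q, r}"
proof -
  have "q + (r - q) * (of_real \<mu> * \<alpha> + of_real x) = \<mu> *\<^sub>R p + (1 - \<mu> - x) *\<^sub>R q + x *\<^sub>R r"
    unfolding assms(1) by (simp add: scaleR_conv_of_real algebra_simps)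
  thus ?thesis unfolding convex_hull_3 using assms(2-4)
    by (intro CollectI exI[of _ \<mu>] exI[of _ "1 - \<mu> - x"] exI[of _ x]) auto
qed

theorem mainTheorem12:
  fixes a :: "nat \<Rightarrow> complex" and i j k :: nat and b :: complex
  assumes "{i, j, k} = {1, 2, 3}"
    and "a 1 \<noteq> a 2" and "a 1 \<noteq> a 3" and "a 2 \<noteq> a 3"
    and "\<not> collinear {a 1, a 2, a 3}"
    and "b \<in> interior (convex hull {a 1, a 2, a 3})"
  shows "\<exists>b'. b' \<in> {b + of_real s * (a k - a j) | s. True} \<and> segment_integral_real a j k b'
           \<and> (\<forall>c. c \<in> {b + of_real s * (a k - a j) | s. True} \<and> segment_integral_real a j k c \<longrightarrow> c = b')
           \<and> b' \<in> convex hull {a 1, a 2, a 3}"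
proof -
  note vertices = vertices_permuted[OF assms(1), of a]
  have noncollinear: "\<not> collinear {a i, a j, a k}" and interior: "b \<in> interior (convex hull {a i, a j, a k})"
    using assms(5,6) unfolding vertices .
  obtain \<alpha> \<mu> x0 where "a k \<noteq> a j" and \<alpha>: "Im \<alpha> \<noteq> 0" "a i = a j + (a k - a j) * \<alpha>"
    and \<mu>: "0 < \<mu>" "\<mu> < 1" and b: "b = a j + (a k - a j) * (of_real \<mu> * \<alpha> + of_real x0)"
    by (rule triangle_line_coordinates[OF noncollinear interior])
  define point where "point x = a j + (a k - a j) * (of_real \<mu> * \<alpha> + of_real x)" for x
  have line: "{b + of_real s * (a k - a j) | s. True} = range point"
    unfolding parallel_line_reparam[OF b] point_def ..
  have real_iff: "segment_integral_real a j k (point x) \<longleftrightarrow> balance \<alpha> \<mu> x = 0" for x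
    using segment_integral_real_iff[OF assms(1) \<open>a k \<noteq> a j\<close> \<alpha>(2) point_def \<alpha>(1)] \<alpha>(1) \<mu>(1)
    by (simp add: balance_def)
  obtain x where x: "x \<in> {0..1 - \<mu>}" "balance \<alpha> \<mu> x = 0" and unique: "\<forall>y. balance \<alpha> \<mu> y = 0 \<longrightarrow> y = x"
    using balance_unique_zero[OF \<alpha>(1) \<mu>] by blast
  show ?thesis
  proof (intro exI[of _ "point x"] conjI allI impI)
    show "point x \<in> {b + of_real s * (a k - a j) | s. True}" unfolding line by blast
    show "segment_integral_real a j k (point x)" using real_iff x(2) by blast
    show "point x \<in> convex hull {a 1, a 2, a 3}"
      unfolding vertices point_def using triangle_point_in_hull[OF \<alpha>(2), of \<mu> x] x(1) \<mu>(1) by simp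
    fix c assume c: "c \<in> {b + of_real s * (a k - a j) | s. True} \<and> segment_integral_real a j k c"
    then obtain y where y: "c = point y" unfolding line by blast
    hence "balance \<alpha> \<mu> y = 0" using c real_iff by simp
    thus "c = point x" using y unique by simp
  qed
qed

end
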